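(* Let $n\geq 6$ be an integer, $K$ a field, $R=K[x_1,\dots,x_n]$, and let $I_n$ be the ideal of $R$ generated by the monomials $x_1x_3,\dots,x_1x_{n-1}$; $x_2x_4,\dots,x_2x_n$; $x_3x_5,\dots,x_3x_n$; $x_4x_n,\dots,x_{n-2}x_n$. Let $B=(b_{ij})_{i,j=1,\dots,n-3}$ be the matrix defined by: $b_{jj}=x_1$ for $j=1,\dots,n-4$ and $b_{n-3,n-3}=x_3$; $b_{j+1,j}=x_2$ for $j=1,\dots,n-4$; $b_{ij}=0$ if $i\geq j+2$; $b_{j-1,j}=x_3x_{3+j}$ for $j=2,\dots,n-4$; $b_{1,n-3}=x_2$ and $b_{i,n-3}=x_{2+i}$ for $i=2,\dots,n-4$; $b_{ij}=0$ if $j\geq i+2$ and $j\neq n-3$. Let $D=\det B-(-1)^n x_2^{n-3}$ and, for $i=1,\dots,n-3$, let $q_i=\sum_{j=1}^{n-3} b_{ij}x_{3+j}$. Then $$I_n=\sqrt{(D,q_1,\dots,q_{n-3})}.$$ *)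

theory Defs
  imports "HOL-Library.Poly_Mapping" "Jordan_Normal_Form.Determinant"
begin

text \<open>Multivariate polynomials over a coefficient ring 'a in the variables x_0, x_1, x_2, ...
  (variables indexed by nat): a monomial is an exponent vector a finitely supported map from nat to nat,
  a polynomial a finitely supported map from monomials to coefficients.\<close>

type_synonym 'a mpoly = "(nat \<Rightarrow>\<^sub>0 nat) \<Rightarrow>\<^sub>0 'a"

definition Var :: "nat \<Rightarrow> 'a::comm_ring_1 mpoly" where
  "Var i = Poly_Mapping.single (Poly_Mapping.single i 1) 1"

definition poly_vars :: "'a::zero mpoly \<Rightarrow> nat set" where
  "poly_vars p = \<Union> (Poly_Mapping.keys ` Poly_Mapping.keys p)"

definition polyring :: "nat \<Rightarrow> 'a::comm_ring_1 mpoly set" where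
  "polyring n = {p. poly_vars p \<subseteq> {1..n}}"

definition ideal_gen :: "'a::comm_ring_1 set \<Rightarrow> 'a set \<Rightarrow> 'a set" where
  "ideal_gen R S = {p. \<exists>F r. finite F \<and> F \<subseteq> S \<and> (\<forall>s\<in>F. r s \<in> R) \<and> p = (\<Sum>s\<in>F. r s * s)}"

definition radical_in :: "'a::comm_ring_1 set \<Rightarrow> 'a set \<Rightarrow> 'a set" where
  "radical_in R J = {f \<in> R. \<exists>k::nat. f ^ k \<in> J}"

definition In_gens :: "nat \<Rightarrow> 'a::comm_ring_1 mpoly set" where
  "In_gens n =
     {Var 1 * Var j | j. 3 \<le> j \<and> j \<le> n - 1} \<union>
     {Var 2 * Var j | j. 4 \<le> j \<and> j \<le> n} \<union>
     {Var 3 * Var j | j. 5 \<le> j \<and> j \<le> n} \<union>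
     {Var i * Var n | i. 4 \<le> i \<and> i \<le> n - 2}"

definition bentry :: "nat \<Rightarrow> nat \<Rightarrow> nat \<Rightarrow> 'a::comm_ring_1 mpoly" where
  "bentry n i j =
    (if i = j \<and> 1 \<le> j \<and> j \<le> n - 4 then Var 1
     else if i = n - 3 \<and> j = n - 3 then Var 3
     else if i = j + 1 \<and> 1 \<le> j \<and> j \<le> n - 4 then Var 2
     else if i \<ge> j + 2 then 0
     else if i + 1 = j \<and> 2 \<le> j \<and> j \<le> n - 4 then Var 3 * Var (3 + j)
     else if j = n - 3 \<and> i = 1 then Var 2
     else if j = n - 3 \<and> 2 \<le> i \<and> i \<le> n - 4 then Var (2 + i)
     else 0)"

text \<open>The (n-3)x(n-3) matrix B (Jordan_Normal_Form matrices are 0-indexed).\<close>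
definition Bmat :: "nat \<Rightarrow> 'a::comm_ring_1 mpoly mat" where
  "Bmat n = mat (n - 3) (n - 3) (\<lambda>(i, j). bentry n (i + 1) (j + 1))"

definition Dpoly :: "nat \<Rightarrow> 'a::comm_ring_1 mpoly" where
  "Dpoly n = det (Bmat n) - (-1) ^ n * Var 2 ^ (n - 3)"

definition qpoly :: "nat \<Rightarrow> nat \<Rightarrow> 'a::comm_ring_1 mpoly" where
  "qpoly n i = (\<Sum>j = 1..n - 3. bentry n i j * Var (3 + j))"

end

theory Submission
  imports Defs
begin

(*
  I_n is the Stanley-Reisner ideal of the complex with facets {1,2}, {2,3}, {3,4}, {4,...,n-1},
  {n-1,n}, {n,1}: a polynomial lies in I_n iff it vanishes whenever all variables outside one
  facet are set to zero. Hence I_n is radical, and it contains q_1, ..., q_{n-3} (term by term)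
  and D (setting the variables outside a facet to zero makes B upper triangular or
  bidiagonal-with-corner, and D becomes 0). So the radical of J = (D, q_1, ..., q_{n-3}) lies in I_n.

  Conversely, B (x_4, ..., x_n)^T = (q_1, ..., q_{n-3})^T, so by Cramer's rule x_k det B is in J,
  hence x_2^(n-3) x_k is in J and x_2 x_k is in the radical of J. Modulo x_2 the determinant
  becomes x_1^(n-4) x_3, and the rows of B, read from top to bottom, put all other generators
  x_a x_b of I_n into the radical of J + (x_2); since x_a x_b x_2 lies in the radical of J,
  so does x_a x_b. The generator x_1 x_3 is treated in the same way modulo x_4, ..., x_n.
*)

section \<open>Subrings, generated ideals and radicals\<close>

locale subring_set =
  fixes R :: "'a::comm_ring_1 set"
  assumes zero_mem [simp]: "0 \<in> R"
    and one_mem [simp]: "1 \<in> R"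
    and add_mem [simp]: "x \<in> R \<Longrightarrow> y \<in> R \<Longrightarrow> x + y \<in> R"
    and uminus_mem [simp]: "x \<in> R \<Longrightarrow> - x \<in> R"
    and mult_mem [simp]: "x \<in> R \<Longrightarrow> y \<in> R \<Longrightarrow> x * y \<in> R"
begin

lemma diff_mem [simp]: "x \<in> R \<Longrightarrow> y \<in> R \<Longrightarrow> x - y \<in> R"
  by (simp only: diff_conv_add_uminus add_mem uminus_mem)

lemma power_mem [simp]: "x \<in> R \<Longrightarrow> x ^ k \<in> R"
  by (induction k) simp_all

lemma of_nat_mem [simp]: "of_nat k \<in> R"
  by (induction k) simp_all

lemma sum_mem [simp]: "(\<And>x. x \<in> A \<Longrightarrow> f x \<in> R) \<Longrightarrow> sum f A \<in> R"
  by (induction A rule: infinite_finite_induct) simp_all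

lemma prod_mem [simp]: "(\<And>x. x \<in> A \<Longrightarrow> f x \<in> R) \<Longrightarrow> prod f A \<in> R"
  by (induction A rule: infinite_finite_induct) simp_all

lemma det_mem:
  assumes "A \<in> carrier_mat N N" and "\<And>i j. i < N \<Longrightarrow> j < N \<Longrightarrow> A $$ (i, j) \<in> R"
  shows "det A \<in> R"
  unfolding det_def'[OF assms(1)] sign_def
  using assms(2) by (auto intro!: sum_mem prod_mem uminus_mem simp: permutes_in_image)

lemma ideal_gen_zero [simp]: "0 \<in> ideal_gen R S"
  unfolding ideal_gen_def by (auto intro!: exI[of _ "{}"])

lemma ideal_gen_base: "s \<in> S \<Longrightarrow> s \<in> ideal_gen R S"
  unfolding ideal_gen_def by (auto intro!: exI[of _ "{s}"] exI[of _ "\<lambda>_. 1"])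

lemma ideal_gen_add [simp]:
  assumes "p \<in> ideal_gen R S" and "q \<in> ideal_gen R S"
  shows "p + q \<in> ideal_gen R S"
proof -
  obtain F r where F: "finite F" "F \<subseteq> S" "\<forall>s\<in>F. r s \<in> R" "p = (\<Sum>s\<in>F. r s * s)"
    using assms(1) unfolding ideal_gen_def by auto
  obtain G r' where G: "finite G" "G \<subseteq> S" "\<forall>s\<in>G. r' s \<in> R" "q = (\<Sum>s\<in>G. r' s * s)"
    using assms(2) unfolding ideal_gen_def by auto
  define t where "t s = (if s \<in> F then r s else 0) + (if s \<in> G then r' s else 0)" for s
  have "p + q = (\<Sum>s\<in>F \<union> G. (if s \<in> F then r s * s else 0)) + (\<Sum>s\<in>F \<union> G. (if s \<in> G then r' s * s else 0))"
    using F G by (simp add: sum.If_cases Int_absorb1 Int_absorb2)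
  also have "\<dots> = (\<Sum>s\<in>F \<union> G. t s * s)"
    unfolding sum.distrib[symmetric] by (rule sum.cong) (auto simp: t_def distrib_right)
  finally show ?thesis
    using F G unfolding ideal_gen_def by (auto simp: t_def intro!: exI[of _ "F \<union> G"] exI[of _ t])
qed

lemma ideal_gen_mult [simp]:
  assumes "p \<in> ideal_gen R S" and "c \<in> R"
  shows "c * p \<in> ideal_gen R S"
proof -
  obtain F r where F: "finite F" "F \<subseteq> S" "\<forall>s\<in>F. r s \<in> R" "p = (\<Sum>s\<in>F. r s * s)"
    using assms(1) unfolding ideal_gen_def by auto
  then have "c * p = (\<Sum>s\<in>F. (c * r s) * s)"
    by (simp add: sum_distrib_left mult.assoc)
  then show ?thesis
    using F assms(2) unfolding ideal_gen_def by (auto intro!: exI[of _ F] exI[of _ "\<lambda>s. c * r s"])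
qed

lemma ideal_gen_mult_right [simp]: "p \<in> ideal_gen R S \<Longrightarrow> c \<in> R \<Longrightarrow> p * c \<in> ideal_gen R S"
  by (metis ideal_gen_mult mult.commute)

lemma ideal_gen_diff [simp]:
  assumes "p \<in> ideal_gen R S" and "q \<in> ideal_gen R S"
  shows "p - q \<in> ideal_gen R S"
proof -
  have "p - q = p + (- 1) * q" by simp
  then show ?thesis using assms by (simp only: ideal_gen_add ideal_gen_mult uminus_mem one_mem)
qed

lemma ideal_gen_sum: "(\<And>x. x \<in> A \<Longrightarrow> f x \<in> ideal_gen R S) \<Longrightarrow> sum f A \<in> ideal_gen R S"
  by (induction A rule: infinite_finite_induct) simp_all

lemma ideal_gen_subset: "S \<subseteq> R \<Longrightarrow> ideal_gen R S \<subseteq> R"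
  unfolding ideal_gen_def by (auto intro!: sum_mem)

end

lemma ideal_gen_mono: "S \<subseteq> T \<Longrightarrow> ideal_gen R S \<subseteq> ideal_gen R T"
  unfolding ideal_gen_def by blast

lemma ideal_gen_minimal:
  assumes "S \<subseteq> T" and "0 \<in> T" and "\<And>p q. p \<in> T \<Longrightarrow> q \<in> T \<Longrightarrow> p + q \<in> T"
    and "\<And>p c. p \<in> T \<Longrightarrow> c \<in> R \<Longrightarrow> c * p \<in> T"
  shows "ideal_gen R S \<subseteq> T"
proof
  fix p assume "p \<in> ideal_gen R S"
  then obtain F r where F: "finite F" "F \<subseteq> S" "\<forall>s\<in>F. r s \<in> R" and p: "p = (\<Sum>s\<in>F. r s * s)"
    unfolding ideal_gen_def by auto
  from F have "(\<Sum>s\<in>F. r s * s) \<in> T"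
    by (induction F rule: finite_induct) (use assms in auto)
  then show "p \<in> T" unfolding p .
qed

context subring_set
begin

lemma ideal_gen_trans: "S \<subseteq> ideal_gen R T \<Longrightarrow> ideal_gen R S \<subseteq> ideal_gen R T"
  by (rule ideal_gen_minimal) auto

lemma ideal_gen_union_split:
  assumes "p \<in> ideal_gen R (S \<union> T)"
  obtains a b where "a \<in> ideal_gen R S" "b \<in> ideal_gen R T" "p = a + b"
proof -
  obtain F r where F: "finite F" "F \<subseteq> S \<union> T" "\<forall>s\<in>F. r s \<in> R" and p: "p = (\<Sum>s\<in>F. r s * s)"
    using assms unfolding ideal_gen_def by auto
  have "p = (\<Sum>s\<in>F \<inter> S. r s * s) + (\<Sum>s\<in>F - S. r s * s)"
    unfolding p by (rule sum.Int_Diff[OF F(1)])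
  moreover have "(\<Sum>s\<in>F \<inter> S. r s * s) \<in> ideal_gen R S" "(\<Sum>s\<in>F - S. r s * s) \<in> ideal_gen R T"
    using F by (auto intro!: ideal_gen_sum ideal_gen_mult intro: ideal_gen_base)
  ultimately show thesis by (rule that[rotated 2])
qed

lemma ideal_gen_subset_radical_in: "S \<subseteq> R \<Longrightarrow> ideal_gen R S \<subseteq> radical_in R (ideal_gen R S)"
  unfolding radical_in_def using ideal_gen_subset by (auto intro!: exI[of _ 1])

lemma radical_in_root: "x \<in> R \<Longrightarrow> x ^ k \<in> radical_in R (ideal_gen R S) \<Longrightarrow> x \<in> radical_in R (ideal_gen R S)"
  unfolding radical_in_def by (auto simp: power_mult[symmetric])

lemma radical_in_zero [simp]: "0 \<in> radical_in R (ideal_gen R S)"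
  unfolding radical_in_def by (auto intro!: exI[of _ 1])

lemma radical_in_mult [simp]:
  assumes "p \<in> radical_in R (ideal_gen R S)" and c: "c \<in> R"
  shows "c * p \<in> radical_in R (ideal_gen R S)"
proof -
  obtain k where "p \<in> R" "p ^ k \<in> ideal_gen R S"
    using assms(1) unfolding radical_in_def by auto
  then have "(c * p) ^ k \<in> ideal_gen R S" using c by (simp add: power_mult_distrib)
  then show ?thesis using c \<open>p \<in> R\<close> unfolding radical_in_def by auto
qed

lemma radical_in_mult_right [simp]:
  "p \<in> radical_in R (ideal_gen R S) \<Longrightarrow> c \<in> R \<Longrightarrow> p * c \<in> radical_in R (ideal_gen R S)"
  using radical_in_mult[of p S c] by (simp add: mult.commute)

lemma radical_in_add [simp]:
  assumes "p \<in> radical_in R (ideal_gen R S)" and "q \<in> radical_in R (ideal_gen R S)"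
  shows "p + q \<in> radical_in R (ideal_gen R S)"
proof -
  obtain a b where pq: "p \<in> R" "q \<in> R" and ab: "p ^ a \<in> ideal_gen R S" "q ^ b \<in> ideal_gen R S"
    using assms unfolding radical_in_def by auto
  \<comment> \<open>every term of the binomial expansion of (p + q)^(a + b) contains p^a or q^b\<close>
  have "p ^ k * q ^ (a + b - k) \<in> ideal_gen R S" for k
  proof (cases "a \<le> k")
    case True
    then have "p ^ k = p ^ a * p ^ (k - a)"
      by (simp flip: power_add)
    then have "p ^ k * q ^ (a + b - k) = p ^ a * (p ^ (k - a) * q ^ (a + b - k))"
      by (simp add: mult.assoc)
    then show ?thesis using ab pq by simp
  next
    case False
    then have "a + b - k = b + (a - k)" by linarith
    then have "q ^ (a + b - k) = q ^ b * q ^ (a - k)"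
      by (simp only: power_add)
    then have "p ^ k * q ^ (a + b - k) = q ^ b * (p ^ k * q ^ (a - k))"
      by (simp add: ac_simps)
    then show ?thesis using ab pq by simp
  qed
  then have "(p + q) ^ (a + b) \<in> ideal_gen R S"
    unfolding binomial_ring by (auto intro!: ideal_gen_sum simp: mult.assoc)
  then show ?thesis using pq unfolding radical_in_def by auto
qed

lemma radical_in_diff [simp]:
  "p \<in> radical_in R (ideal_gen R S) \<Longrightarrow> q \<in> radical_in R (ideal_gen R S)
    \<Longrightarrow> p - q \<in> radical_in R (ideal_gen R S)"
proof -
  assume "p \<in> radical_in R (ideal_gen R S)" "q \<in> radical_in R (ideal_gen R S)"
  moreover have "p - q = p + (- 1) * q" by simp
  ultimately show ?thesis by (simp only: radical_in_add radical_in_mult uminus_mem one_mem)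
qed

lemma ideal_gen_subset_radical_in_ideal_gen:
  "T \<subseteq> radical_in R (ideal_gen R S) \<Longrightarrow> ideal_gen R T \<subseteq> radical_in R (ideal_gen R S)"
  by (rule ideal_gen_minimal) auto

lemma radical_in_split_sum:
  assumes sum: "a * b + c \<in> radical_in R (ideal_gen R S)" and ac: "a * c \<in> radical_in R (ideal_gen R S)"
    and a: "a \<in> R" and b: "b \<in> R"
  shows "a * b \<in> radical_in R (ideal_gen R S)" and "c \<in> radical_in R (ideal_gen R S)"
proof -
  have "(a * (a * b + c) - a * c) * b \<in> radical_in R (ideal_gen R S)"
    using radical_in_diff[OF radical_in_mult[OF sum a] ac] b by (rule radical_in_mult_right)
  moreover have "(a * (a * b + c) - a * c) * b = (a * b) ^ 2"
    by (simp add: algebra_simps power2_eq_square)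
  ultimately show ab: "a * b \<in> radical_in R (ideal_gen R S)"
    using radical_in_root[OF mult_mem[OF a b]] by metis
  show "c \<in> radical_in R (ideal_gen R S)"
    using radical_in_diff[OF sum ab] by simp
qed

lemma radical_in_drop_square:
  assumes ab2: "a * b ^ 2 \<in> radical_in R (ideal_gen R S)" and a: "a \<in> R" and b: "b \<in> R"
  shows "a * b \<in> radical_in R (ideal_gen R S)"
proof -
  have "a * (a * b ^ 2) \<in> radical_in R (ideal_gen R S)"
    using ab2 a by (rule radical_in_mult)
  moreover have "a * (a * b ^ 2) = (a * b) ^ 2"
    by (simp add: algebra_simps power2_eq_square)
  ultimately show ?thesis
    using radical_in_root[OF mult_mem[OF a b]] by metis
qed

lemma radical_in_union_cancel:
  assumes S: "S \<subseteq> R" and f: "f \<in> radical_in R (ideal_gen R (S \<union> H))"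
    and fH: "\<And>h. h \<in> H \<Longrightarrow> f * h \<in> radical_in R (ideal_gen R S)"
  shows "f \<in> radical_in R (ideal_gen R S)"
proof -
  let ?rad = "radical_in R (ideal_gen R S)"
  obtain m where fR: "f \<in> R" and "f ^ m \<in> ideal_gen R (S \<union> H)"
    using f unfolding radical_in_def by auto
  from this(2) obtain a b where a: "a \<in> ideal_gen R S" and b: "b \<in> ideal_gen R H" and fm: "f ^ m = a + b"
    by (rule ideal_gen_union_split)
  have "ideal_gen R H \<subseteq> {b. f * b \<in> ?rad}"
  proof (rule ideal_gen_minimal)
    fix p q assume "p \<in> {b. f * b \<in> ?rad}" "q \<in> {b. f * b \<in> ?rad}"
    then show "p + q \<in> {b. f * b \<in> ?rad}"
      by (simp only: mem_Collect_eq distrib_left radical_in_add)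
  next
    fix p c assume "p \<in> {b. f * b \<in> ?rad}" "c \<in> R"
    then have "c * (f * p) \<in> ?rad" by (simp only: mem_Collect_eq radical_in_mult)
    then show "c * p \<in> {b. f * b \<in> ?rad}" by (simp only: mem_Collect_eq mult.left_commute)
  qed (use fH in auto)
  then have "f * b \<in> ?rad" using b by blast
  moreover have "f * a \<in> ?rad"
    using a fR ideal_gen_subset_radical_in[OF S] by (meson ideal_gen_mult subsetD)
  ultimately have "f ^ Suc m \<in> ?rad"
    unfolding power_Suc fm distrib_left by (rule radical_in_add[rotated])
  then show ?thesis by (rule radical_in_root[OF fR])
qed

end

lemma (in subring_set) det_mult_mem_ideal_gen:
  assumes A: "A \<in> carrier_mat N N" and entries: "\<And>i j. i < N \<Longrightarrow> j < N \<Longrightarrow> A $$ (i, j) \<in> R"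
    and v: "v \<in> carrier_vec N" and j: "j < N"
  shows "det A * v $ j \<in> ideal_gen R {(A *\<^sub>v v) $ i | i. i < N}"
proof -
  have adj: "adj_mat A \<in> carrier_mat N N" "adj_mat A * A = det A \<cdot>\<^sub>m 1\<^sub>m N"
    using adj_mat[OF A] by auto
  have adj_entries: "adj_mat A $$ (j, i) \<in> R" if "i < N" for i
  proof -
    have "det (mat_delete A i j) \<in> R"
      using A that j by (intro det_mem[OF mat_delete_carrier[OF A]]) (auto simp: mat_delete_def intro!: entries)
    then show ?thesis using A that j by (simp add: adj_mat_def cofactor_def)
  qed
  have "det A * v $ j = (\<Sum>i<N. if i = j then det A * v $ i else 0)"
    using j by simp
  also have "\<dots> = (\<Sum>i<N. det A * (if i = j then 1 else 0) * v $ i)"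
    by (rule sum.cong) auto
  also have "\<dots> = ((det A \<cdot>\<^sub>m 1\<^sub>m N) *\<^sub>v v) $ j"
    using v j by (simp add: scalar_prod_def atLeast0LessThan)
  also have "\<dots> = (adj_mat A *\<^sub>v (A *\<^sub>v v)) $ j"
    using adj A v by (simp flip: assoc_mult_mat_vec)
  also have "\<dots> = (\<Sum>i<N. adj_mat A $$ (j, i) * (A *\<^sub>v v) $ i)"
    using adj A v j by (simp add: scalar_prod_def atLeast0LessThan)
  also have "\<dots> \<in> ideal_gen R {(A *\<^sub>v v) $ i | i. i < N}"
    by (rule ideal_gen_sum, rule ideal_gen_mult, rule ideal_gen_base) (use adj_entries in auto)
  finally show ?thesis .
qed

lemma ideal_gen_subset_kernel:
  assumes "comm_ring_hom h" and "\<And>s. s \<in> S \<Longrightarrow> h s = 0" and "p \<in> ideal_gen R S"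
  shows "h p = 0"
proof -
  interpret comm_ring_hom h by fact
  have "ideal_gen R S \<subseteq> {p. h p = 0}"
    by (rule ideal_gen_minimal) (auto simp: assms(2) hom_add hom_mult)
  then show ?thesis using assms(3) by blast
qed

lemma prod_list_diag_mat: "A \<in> carrier_mat N N \<Longrightarrow> prod_list (diag_mat A) = (\<Prod>i<N. A $$ (i, i))"
  unfolding diag_mat_def using prod.distinct_set_conv_list[of "[0..<N]" "\<lambda>i. A $$ (i, i)"]
  by (simp add: atLeast0LessThan)

lemma det_bidiagonal_corner:
  fixes A :: "'a::comm_ring_1 mat"
  assumes A: "A \<in> carrier_mat N N" and N: "2 \<le> N"
    and zero: "\<And>i j. i < N \<Longrightarrow> j < N \<Longrightarrow> \<not> (j = i \<or> j + 1 = i \<or> (i = 0 \<and> j = N - 1))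
      \<Longrightarrow> A $$ (i, j) = 0"
  shows "det A = (\<Prod>i<N. A $$ (i, i)) + (-1) ^ (N - 1) * A $$ (0, N - 1) * (\<Prod>i<N - 1. A $$ (i + 1, i))"
proof -
  have "det A = (\<Sum>j<N. A $$ (0, j) * cofactor A 0 j)"
    using laplace_expansion_row[OF A, of 0] N by simp
  also have "\<dots> = (\<Sum>j\<in>{0, N - 1}. A $$ (0, j) * cofactor A 0 j)"
    by (rule sum.mono_neutral_right) (use N zero in auto)
  also have "\<dots> = A $$ (0, 0) * cofactor A 0 0 + A $$ (0, N - 1) * cofactor A 0 (N - 1)"
    using N by simp
  also have "cofactor A 0 0 = (\<Prod>i<N - 1. A $$ (i + 1, i + 1))"
  proof -
    have M: "mat_delete A 0 0 \<in> carrier_mat (N - 1) (N - 1)" using mat_delete_carrier[OF A] .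
    have "det (mat_delete A 0 0) = prod_list (diag_mat (mat_delete A 0 0))"
      by (rule det_lower_triangular[OF _ M]) (use A in \<open>auto simp: mat_delete_def intro!: zero\<close>)
    also have "\<dots> = (\<Prod>i<N - 1. A $$ (i + 1, i + 1))"
      unfolding prod_list_diag_mat[OF M] by (rule prod.cong) (use A in \<open>auto simp: mat_delete_def\<close>)
    finally show ?thesis unfolding cofactor_def by simp
  qed
  also have "cofactor A 0 (N - 1) = (-1) ^ (N - 1) * (\<Prod>i<N - 1. A $$ (i + 1, i))"
  proof -
    have M: "mat_delete A 0 (N - 1) \<in> carrier_mat (N - 1) (N - 1)" using mat_delete_carrier[OF A] .
    have "det (mat_delete A 0 (N - 1)) = prod_list (diag_mat (mat_delete A 0 (N - 1)))"
      by (rule det_upper_triangular[OF _ M])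
        (use A in \<open>auto simp: mat_delete_def upper_triangular_def intro!: zero\<close>)
    also have "\<dots> = (\<Prod>i<N - 1. A $$ (i + 1, i))"
      unfolding prod_list_diag_mat[OF M] by (rule prod.cong) (use A in \<open>auto simp: mat_delete_def\<close>)
    finally show ?thesis unfolding cofactor_def by simp
  qed
  also have "A $$ (0, 0) * (\<Prod>i<N - 1. A $$ (i + 1, i + 1)) = (\<Prod>i<N. A $$ (i, i))"
    using prod.lessThan_Suc_shift[of "\<lambda>i. A $$ (i, i)" "N - 1"] N by simp
  finally show ?thesis by (simp add: mult.assoc)
qed

section \<open>Polynomials and setting variables to zero\<close>

lemma polyring_iff: "p \<in> polyring n \<longleftrightarrow> (\<forall>m\<in>Poly_Mapping.keys p. Poly_Mapping.keys m \<subseteq> {1..n})"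
  unfolding polyring_def poly_vars_def by auto

lemma keys_add_nat: "Poly_Mapping.keys (a + b :: 'x \<Rightarrow>\<^sub>0 nat) = Poly_Mapping.keys a \<union> Poly_Mapping.keys b"
  by (auto simp: in_keys_iff lookup_add)

interpretation polyring: subring_set "polyring n :: 'a::comm_ring_1 mpoly set" for n
proof
  fix p q :: "'a mpoly"
  assume p: "p \<in> polyring n" and q: "q \<in> polyring n"
  show "p + q \<in> polyring n"
    using p q keys_add[of p q] unfolding polyring_iff by blast
  show "- p \<in> polyring n"
    using p unfolding polyring_iff by (simp add: in_keys_iff)
  show "p * q \<in> polyring n"
    using p q keys_mult[of p q] unfolding polyring_iff by (fastforce simp: keys_add_nat)
qed (simp_all add: polyring_iff)

lemma Var_in_polyring [simp]: "1 \<le> k \<Longrightarrow> k \<le> n \<Longrightarrow> Var k \<in> polyring n"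
  unfolding polyring_iff Var_def by simp

lemma single_in_polyring: "Poly_Mapping.keys m \<subseteq> {1..n} \<Longrightarrow> Poly_Mapping.single m c \<in> polyring n"
  unfolding polyring_iff by simp

lemma Var_mult_Var: "Var a * Var b = Poly_Mapping.single (Poly_Mapping.single a 1 + Poly_Mapping.single b 1) 1"
  unfolding Var_def by (simp add: mult_single)

lemma poly_mapping_sum_single:
  "f = (\<Sum>m\<in>Poly_Mapping.keys f. Poly_Mapping.single m (Poly_Mapping.lookup f m))"
  by (rule poly_mapping_eqI) (simp add: lookup_sum lookup_single when_def in_keys_iff)

definition kill_vars :: "nat set \<Rightarrow> 'a::zero mpoly \<Rightarrow> 'a mpoly" where
  "kill_vars Z = Poly_Mapping.mapp (\<lambda>m c. if Poly_Mapping.keys m \<inter> Z = {} then c else 0)"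

lemma lookup_kill_vars:
  "Poly_Mapping.lookup (kill_vars Z f) m = (if Poly_Mapping.keys m \<inter> Z = {} then Poly_Mapping.lookup f m else 0)"
  by (simp add: kill_vars_def lookup_mapp when_def in_keys_iff)

lemma kill_vars_single:
  "kill_vars Z (Poly_Mapping.single m c) = (if Poly_Mapping.keys m \<inter> Z = {} then Poly_Mapping.single m c else 0)"
  by (rule poly_mapping_eqI) (simp add: lookup_kill_vars lookup_single when_def)

lemma kill_vars_zero: "kill_vars Z 0 = 0"
  by (rule poly_mapping_eqI) (simp add: lookup_kill_vars)

lemma kill_vars_add: "kill_vars Z (f + g) = kill_vars Z f + kill_vars Z g"
  by (rule poly_mapping_eqI) (simp add: lookup_kill_vars lookup_add)

lemma kill_vars_mult: "kill_vars Z (f * g) = kill_vars Z f * kill_vars Z (g :: 'a::comm_ring_1 mpoly)"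
proof -
  let ?k = "kill_vars Z" and ?s = "\<lambda>h m. Poly_Mapping.single m (Poly_Mapping.lookup h m)"
  have k_sum: "?k (sum h A) = (\<Sum>x\<in>A. ?k (h x))" for h :: "_ \<Rightarrow> 'a mpoly" and A
    by (induction A rule: infinite_finite_induct) (simp_all add: kill_vars_add kill_vars_zero)
  have "f * g = (\<Sum>a\<in>Poly_Mapping.keys f. ?s f a) * (\<Sum>b\<in>Poly_Mapping.keys g. ?s g b)"
    by (rule arg_cong2[where f = times]) (rule poly_mapping_sum_single)+
  then have "?k (f * g) = (\<Sum>a\<in>Poly_Mapping.keys f. \<Sum>b\<in>Poly_Mapping.keys g. ?k (?s f a * ?s g b))"
    by (simp add: sum_product k_sum)
  also have "\<dots> = (\<Sum>a\<in>Poly_Mapping.keys f. \<Sum>b\<in>Poly_Mapping.keys g. ?k (?s f a) * ?k (?s g b))"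
    by (intro sum.cong refl) (auto simp: kill_vars_single mult_single keys_add_nat)
  also have "\<dots> = ?k (\<Sum>a\<in>Poly_Mapping.keys f. ?s f a) * ?k (\<Sum>b\<in>Poly_Mapping.keys g. ?s g b)"
    by (simp add: sum_product k_sum)
  finally show ?thesis
    by (simp flip: poly_mapping_sum_single)
qed

interpretation kill_vars: comm_ring_hom "kill_vars Z :: 'a::comm_ring_1 mpoly \<Rightarrow> 'a mpoly" for Z
  by unfold_locales (simp_all add: kill_vars_zero kill_vars_add kill_vars_mult kill_vars_single flip: single_one)

lemma kill_vars_Var: "kill_vars Z (Var k) = (if k \<in> Z then 0 else Var k)"
  unfolding Var_def by (simp add: kill_vars_single)

lemma single_mem_ideal_gen:
  assumes m: "Poly_Mapping.keys m \<subseteq> {1..n}" and d: "\<And>i. Poly_Mapping.lookup d i \<le> Poly_Mapping.lookup m i"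
    and S: "Poly_Mapping.single d 1 \<in> S"
  shows "Poly_Mapping.single m c \<in> ideal_gen (polyring n) S"
proof -
  have "m = (m - d) + d"
    using d by (intro poly_mapping_eqI) (simp add: lookup_add lookup_minus)
  then have "Poly_Mapping.single m c = Poly_Mapping.single (m - d) c * Poly_Mapping.single d 1"
    by (simp add: mult_single)
  moreover have "Poly_Mapping.keys (m - d) \<subseteq> {1..n}"
    using m by (auto simp: in_keys_iff lookup_minus)
  ultimately show ?thesis
    using S by (simp add: single_in_polyring polyring.ideal_gen_base)
qed

lemma single_mem_ideal_gen_Var:
  assumes "Poly_Mapping.keys m \<subseteq> {1..n}" and "k \<in> Poly_Mapping.keys m" and "Var k \<in> S"
  shows "Poly_Mapping.single m c \<in> ideal_gen (polyring n) S"
  using assms by (intro single_mem_ideal_gen[of _ _ "Poly_Mapping.single k 1"])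
    (auto simp: Var_def lookup_single when_def in_keys_iff)

lemma single_mem_ideal_gen_Var_mult:
  assumes "Poly_Mapping.keys m \<subseteq> {1..n}" and "a \<in> Poly_Mapping.keys m" and "b \<in> Poly_Mapping.keys m"
    and "a \<noteq> b" and "Var a * Var b \<in> S"
  shows "Poly_Mapping.single m c \<in> ideal_gen (polyring n) S"
  using assms
  by (intro single_mem_ideal_gen[of _ _ "Poly_Mapping.single a 1 + Poly_Mapping.single b 1"])
    (auto simp: Var_mult_Var lookup_add lookup_single when_def in_keys_iff)

lemma mem_ideal_gen_if_monomials:
  assumes "\<And>m. m \<in> Poly_Mapping.keys f
    \<Longrightarrow> Poly_Mapping.single m (Poly_Mapping.lookup f m) \<in> ideal_gen (polyring n) S"
  shows "f \<in> ideal_gen (polyring n) S"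
  by (subst poly_mapping_sum_single) (rule polyring.ideal_gen_sum[OF assms])

lemma diff_kill_vars_mem_ideal_gen:
  assumes f: "f \<in> polyring n"
  shows "f - kill_vars Z f \<in> ideal_gen (polyring n) (Var ` (Z \<inter> {1..n}))"
proof (rule mem_ideal_gen_if_monomials)
  fix m assume m: "m \<in> Poly_Mapping.keys (f - kill_vars Z f)"
  then obtain k where "k \<in> Poly_Mapping.keys m" "k \<in> Z" and "m \<in> Poly_Mapping.keys f"
    by (auto simp: in_keys_iff lookup_minus lookup_kill_vars split: if_splits)
  moreover have "Poly_Mapping.keys m \<subseteq> {1..n}"
    using f \<open>m \<in> Poly_Mapping.keys f\<close> unfolding polyring_iff by blast
  ultimately show "Poly_Mapping.single m (Poly_Mapping.lookup (f - kill_vars Z f) m)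
      \<in> ideal_gen (polyring n) (Var ` (Z \<inter> {1..n}))"
    by (intro single_mem_ideal_gen_Var[of _ _ k]) auto
qed

section \<open>The monomial ideal I_n\<close>

definition In_edge :: "nat \<Rightarrow> nat \<Rightarrow> nat \<Rightarrow> bool" where
  "In_edge n a b \<longleftrightarrow>
     (a = 1 \<and> 3 \<le> b \<and> b \<le> n - 1) \<or> (a = 2 \<and> 4 \<le> b \<and> b \<le> n) \<or>
     (a = 3 \<and> 5 \<le> b \<and> b \<le> n) \<or> (4 \<le> a \<and> a \<le> n - 2 \<and> b = n)"

lemma In_gens_eq: "In_gens n = {Var a * Var b | a b. In_edge n a b}"
  unfolding In_gens_def In_edge_def by blast

lemma Var_mult_Var_mem_In:
  "In_edge n a b \<Longrightarrow> Var a * Var b \<in> ideal_gen (polyring n) (In_gens n)"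
  unfolding In_gens_eq by (rule polyring.ideal_gen_base) blast

definition In_facets :: "nat \<Rightarrow> nat set set" where
  "In_facets n = {{1, 2}, {2, 3}, {3, 4}, {4..n - 1}, {n - 1, n}, {n, 1}}"

lemma In_edge_not_in_facet:
  "6 \<le> n \<Longrightarrow> In_edge n a b \<Longrightarrow> S \<in> In_facets n \<Longrightarrow> a \<in> S \<Longrightarrow> b \<notin> S"
  unfolding In_edge_def In_facets_def by auto

lemma In_edge_range: "In_edge n a b \<Longrightarrow> 1 \<le> a \<and> a < b \<and> b \<le> n"
  unfolding In_edge_def by auto

lemma In_non_neighbours:
  assumes "6 \<le> n" and "1 \<le> t" "t \<le> n"
  shows "\<not> In_edge n 1 t \<Longrightarrow> t = 1 \<or> t = 2 \<or> t = n"
    and "\<not> In_edge n 2 t \<Longrightarrow> t \<noteq> 1 \<Longrightarrow> t = 2 \<or> t = 3"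
    and "\<not> In_edge n 3 t \<Longrightarrow> t \<noteq> 1 \<Longrightarrow> t \<noteq> 2 \<Longrightarrow> t = 3 \<or> t = 4"
    and "\<not> In_edge n t n \<Longrightarrow> 4 \<le> t \<Longrightarrow> t = n - 1 \<or> t = n"
  using assms unfolding In_edge_def by linarith+

lemma In_edge_free_subset_facet:
  assumes n: "6 \<le> n" and T: "T \<subseteq> {1..n}" and free: "\<And>a b. a \<in> T \<Longrightarrow> b \<in> T \<Longrightarrow> \<not> In_edge n a b"
  shows "\<exists>S\<in>In_facets n. T \<subseteq> S"
proof -
  note nb = In_non_neighbours[OF n]
  have t: "1 \<le> t" "t \<le> n" if "t \<in> T" for t
    using T that by auto
  have "T \<subseteq> {4..n}" if "1 \<notin> T" "2 \<notin> T" "3 \<notin> T"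
  proof
    fix t assume "t \<in> T"
    with that have "t \<noteq> 1" "t \<noteq> 2" "t \<noteq> 3" by auto
    with t[OF \<open>t \<in> T\<close>] show "t \<in> {4..n}" by simp
  qed
  then consider (one) "1 \<in> T" | (two) "1 \<notin> T" "2 \<in> T" | (three) "1 \<notin> T" "2 \<notin> T" "3 \<in> T"
    | (high) "T \<subseteq> {4..n}"
    by blast
  then have "T \<subseteq> {1, 2} \<or> T \<subseteq> {n, 1} \<or> T \<subseteq> {2, 3} \<or> T \<subseteq> {3, 4}
    \<or> T \<subseteq> {n - 1, n} \<or> T \<subseteq> {4..n - 1}"
  proof cases
    case one
    have "T \<subseteq> {1, 2, n}" using nb(1) t free[OF one] by blast
    moreover have "\<not> (2 \<in> T \<and> n \<in> T)" using free[of 2 n] n by (auto simp: In_edge_def)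
    ultimately show ?thesis by blast
  next
    case two
    have "T \<subseteq> {2, 3}" using nb(2) t free[OF two(2)] two(1) by blast
    then show ?thesis by blast
  next
    case three
    have "T \<subseteq> {3, 4}" using nb(3) t free[OF three(3)] three(1,2) by blast
    then show ?thesis by blast
  next
    case high
    then have ge4: "4 \<le> t" if "t \<in> T" for t using that by auto
    show ?thesis
    proof (cases "n \<in> T")
      case True
      have "T \<subseteq> {n - 1, n}" using nb(4) t ge4 free[OF _ True] by blast
      then show ?thesis by blast
    next
      case False
      have "t \<le> n - 1" if "t \<in> T" for t
        using t[OF that] False that by (cases "t = n") auto
      then have "T \<subseteq> {4..n - 1}" using ge4 by auto
      then show ?thesis by blast
    qed
  qed
  then show ?thesis unfolding In_facets_def by blast
qed

lemma kill_vars_In_ideal: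
  assumes "6 \<le> n" and "S \<in> In_facets n" and "f \<in> ideal_gen (polyring n) (In_gens n)"
  shows "kill_vars (- S) f = 0"
proof (rule ideal_gen_subset_kernel[OF kill_vars.comm_ring_hom_axioms _ assms(3)])
  fix g :: "'a mpoly" assume "g \<in> In_gens n"
  then obtain a b where "g = Var a * Var b" "In_edge n a b" unfolding In_gens_eq by blast
  then show "kill_vars (- S) g = 0"
    using In_edge_not_in_facet[OF assms(1) _ assms(2)] by (auto simp: kill_vars.hom_mult kill_vars_Var)
qed

lemma mem_In_ideal_iff:
  assumes n: "6 \<le> n" and f: "f \<in> polyring n"
  shows "f \<in> ideal_gen (polyring n) (In_gens n) \<longleftrightarrow> (\<forall>S\<in>In_facets n. kill_vars (- S) f = 0)"
proof
  show "\<forall>S\<in>In_facets n. kill_vars (- S) f = 0" if "f \<in> ideal_gen (polyring n) (In_gens n)"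
    using kill_vars_In_ideal[OF n _ that] by blast
next
  assume "\<forall>S\<in>In_facets n. kill_vars (- S) f = 0"
  have killed: "\<not> Poly_Mapping.keys m \<subseteq> S" if "m \<in> Poly_Mapping.keys f" "S \<in> In_facets n" for m S
  proof
    assume "Poly_Mapping.keys m \<subseteq> S"
    then have "Poly_Mapping.lookup (kill_vars (- S) f) m = Poly_Mapping.lookup f m"
      by (auto simp: lookup_kill_vars)
    then show False using that \<open>\<forall>S\<in>In_facets n. kill_vars (- S) f = 0\<close> by (simp add: in_keys_iff)
  qed
  show "f \<in> ideal_gen (polyring n) (In_gens n)"
  proof (rule mem_ideal_gen_if_monomials)
    fix m assume m: "m \<in> Poly_Mapping.keys f"
    then have km: "Poly_Mapping.keys m \<subseteq> {1..n}" using f unfolding polyring_iff by blast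
    then obtain a b where "a \<in> Poly_Mapping.keys m" "b \<in> Poly_Mapping.keys m" "In_edge n a b"
      using In_edge_free_subset_facet[OF n km] killed[OF m] by blast
    moreover from this have "a \<noteq> b" by (auto simp: In_edge_def)
    ultimately show "Poly_Mapping.single m (Poly_Mapping.lookup f m) \<in> ideal_gen (polyring n) (In_gens n)"
      using km by (intro single_mem_ideal_gen_Var_mult) (auto simp: In_gens_eq)
  qed
qed

lemma In_ideal_radical:
  fixes f :: "'a::idom mpoly"
  assumes n: "6 \<le> n" and f: "f \<in> polyring n" and "f ^ k \<in> ideal_gen (polyring n) (In_gens n)"
  shows "f \<in> ideal_gen (polyring n) (In_gens n)"
proof -
  have "kill_vars (- S) f ^ k = 0" if "S \<in> In_facets n" for S
    using kill_vars_In_ideal[OF n that assms(3)] by (simp add: kill_vars.hom_power)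
  then show ?thesis using mem_In_ideal_iff[OF n f] by simp
qed

section \<open>The matrix B\<close>

lemma bentry_in_polyring: "3 \<le> n \<Longrightarrow> bentry n i j \<in> polyring n"
proof -
  assume n: "3 \<le> n"
  \<comment> \<open>split the nested if one branch at a time: the accumulated negated guards make plain
    simp with bentry_def explode in the arithmetic\<close>
  have if_in: "(if P then a else b) \<in> polyring n" if "P \<Longrightarrow> a \<in> polyring n" "b \<in> polyring n" for P and a b :: "'a mpoly"
    using that by simp
  show ?thesis
    unfolding bentry_def by (intro if_in) (use n in \<open>auto intro!: polyring.mult_mem\<close>)
qed

lemma bentry_mult_Var_mem_In:
  assumes n: "6 \<le> n" and j: "1 \<le> j" "j \<le> n - 3"
  shows "bentry n i j * Var (3 + j) \<in> ideal_gen (polyring n) (In_gens n)"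
proof -
  have "3 + (n - 3) = n" using n by simp
  then show ?thesis
    unfolding bentry_def using n j
    by (auto simp: mult.commute[of _ "Var 3"] mult.assoc[symmetric] In_edge_def
        intro!: Var_mult_Var_mem_In polyring.ideal_gen_mult_right)
qed

lemma qpoly_mem_In: "6 \<le> n \<Longrightarrow> qpoly n i \<in> ideal_gen (polyring n) (In_gens n)"
  unfolding qpoly_def by (auto intro!: polyring.ideal_gen_sum bentry_mult_Var_mem_In)

lemma Bmat_carrier: "Bmat n \<in> carrier_mat (n - 3) (n - 3)"
  unfolding Bmat_def by simp

lemma dim_Bmat [simp]: "dim_row (Bmat n) = n - 3" "dim_col (Bmat n) = n - 3"
  unfolding Bmat_def by simp_all

lemma Bmat_index: "i < n - 3 \<Longrightarrow> j < n - 3 \<Longrightarrow> Bmat n $$ (i, j) = bentry n (Suc i) (Suc j)"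
  unfolding Bmat_def by simp

lemma det_Bmat_in_polyring: "3 \<le> n \<Longrightarrow> det (Bmat n) \<in> polyring n"
  by (rule polyring.det_mem[OF Bmat_carrier]) (simp add: Bmat_index bentry_in_polyring)

lemma Dpoly_in_polyring: "3 \<le> n \<Longrightarrow> Dpoly n \<in> polyring n"
  unfolding Dpoly_def by (simp add: det_Bmat_in_polyring)

lemma qpoly_in_polyring: "3 \<le> n \<Longrightarrow> qpoly n i \<in> polyring n"
  unfolding qpoly_def by (auto intro!: polyring.sum_mem polyring.mult_mem bentry_in_polyring)

lemma bentry_diag: "1 \<le> i \<Longrightarrow> i \<le> n - 4 \<Longrightarrow> bentry n i i = Var 1"
  unfolding bentry_def by auto

lemma bentry_last: "4 \<le> n \<Longrightarrow> bentry n (n - 3) (n - 3) = Var 3"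
  unfolding bentry_def by auto

lemma bentry_sub: "1 \<le> j \<Longrightarrow> j \<le> n - 4 \<Longrightarrow> bentry n (Suc j) j = Var 2"
  unfolding bentry_def by auto

lemma bentry_eq_zero: "i \<noteq> j \<Longrightarrow> i \<noteq> Suc j \<Longrightarrow> Suc i \<noteq> j \<Longrightarrow> j \<noteq> n - 3 \<Longrightarrow> bentry n i j = 0"
  unfolding bentry_def by auto

lemma qpoly_eq_sum:
  assumes "T \<subseteq> {1..n - 3}" and "\<And>j. j \<in> {1..n - 3} \<Longrightarrow> j \<notin> T \<Longrightarrow> bentry n i j = (0 :: 'a::comm_ring_1 mpoly)"
  shows "qpoly n i = (\<Sum>j\<in>T. bentry n i j * Var (3 + j) :: 'a mpoly)"
  unfolding qpoly_def
proof (rule sum.mono_neutral_right)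
  show "\<forall>j\<in>{1..n - 3} - T. bentry n i j * Var (3 + j) = (0 :: 'a mpoly)"
  proof
    fix j assume "j \<in> {1..n - 3} - T"
    then have "bentry n i j = (0 :: 'a mpoly)" using assms(2) by blast
    then show "bentry n i j * Var (3 + j) = (0 :: 'a mpoly)" by simp
  qed
qed (use assms(1) in auto)

lemma qpoly_first:
  assumes n: "6 \<le> n"
  shows "qpoly n 1 = Var 1 * Var 4 + Var 3 * Var 5 ^ 2 + Var 2 * Var n"
proof -
  have idx: "n - 3 \<noteq> 1" "n - 3 \<noteq> 2" "3 + (n - 3) = n" using n by auto
  have "qpoly n 1 = (\<Sum>j\<in>{1, 2, n - 3}. bentry n 1 j * Var (3 + j) :: 'a mpoly)"
    using n by (intro qpoly_eq_sum) (auto intro!: bentry_eq_zero)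
  also have "\<dots> = bentry n 1 1 * Var 4 + bentry n 1 2 * Var 5 + bentry n 1 (n - 3) * Var n"
    using idx by (simp add: add.assoc)
  also have "\<dots> = Var 1 * Var 4 + Var 3 * Var 5 ^ 2 + Var 2 * Var n"
  proof -
    have "bentry n 1 1 = (Var 1 :: 'a mpoly)" "bentry n 1 2 = (Var 3 * Var 5 :: 'a mpoly)"
      "bentry n 1 (n - 3) = (Var 2 :: 'a mpoly)"
      using n by (auto simp: bentry_def)
    then show ?thesis by (simp add: power2_eq_square mult.assoc)
  qed
  finally show ?thesis .
qed

lemma qpoly_mid:
  assumes n: "6 \<le> n" and i: "2 \<le> i" "i \<le> n - 5"
  shows "qpoly n i = Var 2 * Var (2 + i) + Var 1 * Var (3 + i) + Var 3 * Var (4 + i) ^ 2 + Var (2 + i) * Var n"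
proof -
  have idx: "i - 1 \<noteq> i" "i - 1 \<noteq> Suc i" "i - 1 \<noteq> n - 3" "i \<noteq> n - 3" "Suc i \<noteq> n - 3"
    "3 + (i - 1) = 2 + i" "3 + Suc i = 4 + i" "3 + (n - 3) = n" "Suc (i - 1) = i"
    using n i by auto
  have "qpoly n i = (\<Sum>j\<in>{i - 1, i, Suc i, n - 3}. bentry n i j * Var (3 + j) :: 'a mpoly)"
    using n i by (intro qpoly_eq_sum) (auto intro!: bentry_eq_zero)
  also have "\<dots> = bentry n i (i - 1) * Var (2 + i) + bentry n i i * Var (3 + i)
      + bentry n i (Suc i) * Var (4 + i) + bentry n i (n - 3) * Var n"
    using idx by (simp add: add.assoc)
  also have "\<dots> = Var 2 * Var (2 + i) + Var 1 * Var (3 + i) + Var 3 * Var (4 + i) ^ 2 + Var (2 + i) * Var n"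
  proof -
    have "bentry n i (i - 1) = (Var 2 :: 'a mpoly)" "bentry n i i = (Var 1 :: 'a mpoly)"
      "bentry n i (Suc i) = (Var 3 * Var (4 + i) :: 'a mpoly)" "bentry n i (n - 3) = (Var (2 + i) :: 'a mpoly)"
      using n i by (auto simp: bentry_def)
    then show ?thesis by (simp add: power2_eq_square mult.assoc)
  qed
  finally show ?thesis .
qed

lemma qpoly_penultimate:
  assumes n: "6 \<le> n"
  shows "qpoly n (n - 4) = Var 2 * Var (n - 2) + Var 1 * Var (n - 1) + Var (n - 2) * Var n"
proof -
  have idx: "n - 5 \<noteq> n - 4" "n - 5 \<noteq> n - 3" "n - 4 \<noteq> n - 3" "Suc (n - 5) = n - 4"
    "3 + (n - 5) = n - 2" "3 + (n - 4) = n - 1" "3 + (n - 3) = n" "2 + (n - 4) = n - 2"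
    using n by auto
  have "qpoly n (n - 4) = (\<Sum>j\<in>{n - 5, n - 4, n - 3}. bentry n (n - 4) j * Var (3 + j) :: 'a mpoly)"
    using n by (intro qpoly_eq_sum) (auto intro!: bentry_eq_zero)
  also have "\<dots> = bentry n (n - 4) (n - 5) * Var (n - 2) + bentry n (n - 4) (n - 4) * Var (n - 1)
      + bentry n (n - 4) (n - 3) * Var n"
    using idx by (simp add: add.assoc)
  also have "\<dots> = Var 2 * Var (n - 2) + Var 1 * Var (n - 1) + Var (n - 2) * Var n"
  proof -
    have "bentry n (n - 4) (n - 5) = (Var 2 :: 'a mpoly)" "bentry n (n - 4) (n - 4) = (Var 1 :: 'a mpoly)"
      using n by (auto simp: bentry_def)
    moreover have "bentry n (n - 4) (n - 3) = (Var (n - 2) :: 'a mpoly)"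
      using n idx(8) by (auto simp: bentry_def)
    ultimately show ?thesis by simp
  qed
  finally show ?thesis .
qed

lemma qpoly_last:
  assumes n: "6 \<le> n"
  shows "qpoly n (n - 3) = Var 2 * Var (n - 1) + Var 3 * Var n"
proof -
  have idx: "n - 4 \<noteq> n - 3" "Suc (n - 4) = n - 3" "3 + (n - 4) = n - 1" "3 + (n - 3) = n"
    using n by auto
  have "qpoly n (n - 3) = (\<Sum>j\<in>{n - 4, n - 3}. bentry n (n - 3) j * Var (3 + j) :: 'a mpoly)"
    using n by (intro qpoly_eq_sum) (auto intro!: bentry_eq_zero)
  also have "\<dots> = bentry n (n - 3) (n - 4) * Var (n - 1) + bentry n (n - 3) (n - 3) * Var n"
    using idx by simp
  also have "\<dots> = Var 2 * Var (n - 1) + Var 3 * Var n"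
  proof -
    have "bentry n (n - 3) (n - 4) = (Var 2 :: 'a mpoly)" "bentry n (n - 3) (n - 3) = (Var 3 :: 'a mpoly)"
      using n by (auto simp: bentry_def)
    then show ?thesis by simp
  qed
  finally show ?thesis .
qed

lemma prod_diag_Bmat:
  assumes "4 \<le> n"
  shows "(\<Prod>i<n - 3. Bmat n $$ (i, i)) = Var 1 ^ (n - 4) * Var 3"
proof -
  have "n - 3 = Suc (n - 4)" using assms by simp
  then have "(\<Prod>i<n - 3. Bmat n $$ (i, i)) = (\<Prod>i<n - 4. Bmat n $$ (i, i)) * Bmat n $$ (n - 4, n - 4)"
    by simp
  also have "(\<Prod>i<n - 4. Bmat n $$ (i, i)) = (\<Prod>i<n - 4. Var 1)"
    by (rule prod.cong) (auto simp: Bmat_index bentry_diag)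
  also have "Bmat n $$ (n - 4, n - 4) = Var 3"
    using assms \<open>n - 3 = Suc (n - 4)\<close> by (simp add: Bmat_index flip: bentry_last[OF assms])
  finally show ?thesis by simp
qed

lemma prod_diag_kill_vars_Bmat:
  assumes "4 \<le> n"
  shows "(\<Prod>i<n - 3. map_mat (kill_vars Z) (Bmat n) $$ (i, i)) = kill_vars Z (Var 1 ^ (n - 4) * Var 3)"
proof -
  have "(\<Prod>i<n - 3. map_mat (kill_vars Z) (Bmat n) $$ (i, i)) = kill_vars Z (\<Prod>i<n - 3. Bmat n $$ (i, i))"
    by (simp add: kill_vars.hom_prod)
  then show ?thesis by (simp only: prod_diag_Bmat[OF assms])
qed

lemma kill_vars_bentry_below_diag:
  assumes n: "6 \<le> n" and "2 \<in> Z" and "j < i"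
  shows "kill_vars Z (bentry n i j) = 0"
proof -
  have if_zero: "kill_vars Z (if P then a else b) = 0"
    if "P \<Longrightarrow> kill_vars Z a = 0" "kill_vars Z b = 0" for P and a b :: "'a mpoly"
    using that by simp
  show ?thesis
    unfolding bentry_def by (intro if_zero) (use assms in \<open>auto simp: kill_vars_Var\<close>)
qed

lemma kill_vars_bentry_off_bidiagonal:
  assumes n: "6 \<le> n" and Z: "{4..n} \<subseteq> Z" and "i \<noteq> j" "i \<noteq> Suc j" "\<not> (i = 1 \<and> j = n - 3)"
  shows "kill_vars Z (bentry n i j) = 0"
proof -
  have if_zero: "kill_vars Z (if P then a else b) = 0"
    if "P \<Longrightarrow> kill_vars Z a = 0" "kill_vars Z b = 0" for P and a b :: "'a mpoly"
    using that by simp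
  have "k \<in> Z" if "4 \<le> k" "k \<le> n" for k
    using Z that by auto
  then show ?thesis
    unfolding bentry_def by (intro if_zero) (use assms in \<open>auto simp: kill_vars.hom_mult kill_vars_Var\<close>)
qed

lemma kill_vars_det_Bmat_upper:
  assumes n: "6 \<le> n" and Z: "2 \<in> Z"
  shows "kill_vars Z (det (Bmat n)) = kill_vars Z (Var 1 ^ (n - 4) * Var 3)"
proof -
  let ?K = "map_mat (kill_vars Z) (Bmat n)"
  have K: "?K \<in> carrier_mat (n - 3) (n - 3)" using Bmat_carrier by simp
  have "upper_triangular ?K"
    using K by (auto simp: upper_triangular_def Bmat_index intro!: kill_vars_bentry_below_diag[OF n Z])
  then have "det ?K = prod_list (diag_mat ?K)"
    using K by (rule det_upper_triangular)
  also have "\<dots> = (\<Prod>i<n - 3. ?K $$ (i, i))"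
    by (rule prod_list_diag_mat[OF K])
  also have "\<dots> = kill_vars Z (Var 1 ^ (n - 4) * Var 3)"
    using n by (simp only: prod_diag_kill_vars_Bmat)
  finally show ?thesis by (simp add: kill_vars.hom_det)
qed

lemma kill_vars_det_Bmat_bidiagonal:
  assumes n: "6 \<le> n" and Z: "{4..n} \<subseteq> Z"
  shows "kill_vars Z (det (Bmat n)) = kill_vars Z (Var 1 ^ (n - 4) * Var 3 + (-1) ^ (n - 4) * Var 2 ^ (n - 3))"
proof -
  let ?K = "map_mat (kill_vars Z) (Bmat n)"
  have K: "?K \<in> carrier_mat (n - 3) (n - 3)" using Bmat_carrier by simp
  have N: "n - 3 - 1 = n - 4" "n - 3 = Suc (n - 4)" using n by auto
  have "det ?K = (\<Prod>i<n - 3. ?K $$ (i, i))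
      + (-1) ^ (n - 3 - 1) * ?K $$ (0, n - 3 - 1) * (\<Prod>i<n - 3 - 1. ?K $$ (i + 1, i))"
  proof (rule det_bidiagonal_corner[OF K])
    fix i j assume "i < n - 3" "j < n - 3" "\<not> (j = i \<or> j + 1 = i \<or> (i = 0 \<and> j = n - 3 - 1))"
    then show "?K $$ (i, j) = 0"
      by (auto simp: Bmat_index intro!: kill_vars_bentry_off_bidiagonal[OF n Z])
  qed (use n in simp)
  then have "det ?K = (\<Prod>i<n - 3. ?K $$ (i, i))
      + (-1) ^ (n - 4) * ?K $$ (0, n - 4) * (\<Prod>i<n - 4. ?K $$ (i + 1, i))"
    by (simp only: N(1))
  also have "(\<Prod>i<n - 3. ?K $$ (i, i)) = kill_vars Z (Var 1 ^ (n - 4) * Var 3)"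
    using n by (simp only: prod_diag_kill_vars_Bmat)
  also have "?K $$ (0, n - 4) = kill_vars Z (Var 2)"
    using n by (simp add: Bmat_index N(2)) (auto simp: bentry_def)
  also have "(\<Prod>i<n - 4. ?K $$ (i + 1, i)) = (\<Prod>i<n - 4. kill_vars Z (Var 2))"
    by (rule prod.cong) (auto simp: Bmat_index bentry_sub)
  finally show ?thesis
    by (simp add: kill_vars.hom_det kill_vars.hom_add kill_vars.hom_mult kill_vars.hom_power
        kill_vars.hom_uminus N(2) mult_ac)
qed

section \<open>The ideal generated by D and the q_i\<close>

definition Dq_gens :: "nat \<Rightarrow> 'a::comm_ring_1 mpoly set" where
  "Dq_gens n = {Dpoly n} \<union> {qpoly n i | i. 1 \<le> i \<and> i \<le> n - 3}"

lemma Dq_gens_in_polyring: "3 \<le> n \<Longrightarrow> Dq_gens n \<subseteq> polyring n"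
  unfolding Dq_gens_def by (auto simp: Dpoly_in_polyring qpoly_in_polyring)

lemma Dpoly_mem_Dq_ideal: "Dpoly n \<in> ideal_gen (polyring n) (Dq_gens n)"
  unfolding Dq_gens_def by (rule polyring.ideal_gen_base) blast

lemma qpoly_mem_Dq_ideal: "1 \<le> i \<Longrightarrow> i \<le> n - 3 \<Longrightarrow> qpoly n i \<in> ideal_gen (polyring n) (Dq_gens n)"
  unfolding Dq_gens_def by (rule polyring.ideal_gen_base) blast

lemma kill_vars_Dpoly:
  assumes n: "6 \<le> n" and Z: "2 \<in> Z \<or> {4..n} \<subseteq> Z"
  shows "kill_vars Z (Dpoly n) = kill_vars Z (Var 1 ^ (n - 4) * Var 3)"
  using Z
proof
  assume Z2: "2 \<in> Z"
  have "kill_vars Z (Var 2 ^ (n - 3)) = (0 :: 'a mpoly)"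
    using Z2 n by (simp add: kill_vars.hom_power kill_vars_Var power_0_left)
  then show ?thesis
    using kill_vars_det_Bmat_upper[OF n Z2] by (simp add: Dpoly_def kill_vars.hom_minus kill_vars.hom_mult)
next
  assume Z4: "{4..n} \<subseteq> Z"
  have det: "kill_vars Z (det (Bmat n)) =
      kill_vars Z (Var 1 ^ (n - 4) * Var 3 + (-1) ^ (n - 4) * Var 2 ^ (n - 3) :: 'a mpoly)"
    by (rule kill_vars_det_Bmat_bidiagonal[OF n Z4])
  have "(-1) ^ (n - 4) = ((-1) ^ n :: 'a mpoly)"
    using power_add[of "-1 :: 'a mpoly" "n - 4" 4] n by simp
  then show ?thesis
    using det by (simp add: Dpoly_def kill_vars.hom_minus kill_vars.hom_add)
qed

lemma Dpoly_mem_In: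
  assumes n: "6 \<le> n"
  shows "(Dpoly n :: 'a::comm_ring_1 mpoly) \<in> ideal_gen (polyring n) (In_gens n)"
proof -
  have killed: "kill_vars (- S) (Dpoly n) = (0 :: 'a mpoly)" if S: "S \<in> In_facets n" for S
  proof -
    have "2 \<in> - S \<or> {4..n} \<subseteq> - S" and "1 \<in> - S \<or> 3 \<in> - S"
      using S n by (auto simp: In_facets_def)
    then show ?thesis
      using n by (auto simp: kill_vars_Dpoly kill_vars.hom_mult kill_vars.hom_power kill_vars_Var power_0_left)
  qed
  show ?thesis
    by (subst mem_In_ideal_iff[OF n Dpoly_in_polyring]) (use killed n in auto)
qed

lemma Dq_ideal_subset_In_ideal:
  "6 \<le> n \<Longrightarrow> ideal_gen (polyring n) (Dq_gens n) \<subseteq> ideal_gen (polyring n) (In_gens n)"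
  by (rule polyring.ideal_gen_trans) (auto simp: Dq_gens_def Dpoly_mem_In qpoly_mem_In)

lemma Bmat_mult_vec_index:
  "i < n - 3 \<Longrightarrow> (Bmat n *\<^sub>v vec (n - 3) (\<lambda>j. Var (3 + Suc j))) $ i = qpoly n (Suc i)"
  by (simp add: qpoly_def scalar_prod_def Bmat_index atLeast0LessThan sum.atLeast1_atMost_eq)

lemma det_Bmat_mult_Var_mem_Dq_ideal:
  assumes n: "6 \<le> n" and k: "4 \<le> k" "k \<le> n"
  shows "det (Bmat n) * Var k \<in> ideal_gen (polyring n) (Dq_gens n)"
proof -
  let ?v = "vec (n - 3) (\<lambda>j. Var (3 + Suc j)) :: 'a mpoly vec"
  have "det (Bmat n) * ?v $ (k - 4) \<in> ideal_gen (polyring n) {(Bmat n *\<^sub>v ?v) $ i | i. i < n - 3}"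
    using n k by (intro polyring.det_mult_mem_ideal_gen[OF Bmat_carrier])
      (auto simp: Bmat_index bentry_in_polyring)
  moreover have "{(Bmat n *\<^sub>v ?v) $ i | i. i < n - 3} \<subseteq> ideal_gen (polyring n) (Dq_gens n)"
  proof
    fix p assume "p \<in> {(Bmat n *\<^sub>v ?v) $ i | i. i < n - 3}"
    then obtain i where i: "i < n - 3" and p: "p = (Bmat n *\<^sub>v ?v) $ i" by blast
    show "p \<in> ideal_gen (polyring n) (Dq_gens n)"
      unfolding p Bmat_mult_vec_index[OF i] using i by (intro qpoly_mem_Dq_ideal) simp_all
  qed
  ultimately have "det (Bmat n) * ?v $ (k - 4) \<in> ideal_gen (polyring n) (Dq_gens n)"
    using polyring.ideal_gen_trans by blast
  moreover have "3 + Suc (k - 4) = k" using k by simp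
  ultimately show ?thesis using k by simp
qed

lemma Var2_mult_Var_mem_Dq_radical:
  assumes n: "6 \<le> n" and k: "4 \<le> k" "k \<le> n"
  shows "Var 2 * Var k \<in> radical_in (polyring n) (ideal_gen (polyring n) (Dq_gens n))"
proof -
  have vk: "Var k \<in> (polyring n :: 'a mpoly set)" using k by simp
  have "Var 2 ^ (n - 3) * Var k = (-1) ^ n * (det (Bmat n) * Var k - Dpoly n * Var k :: 'a mpoly)"
    by (simp add: Dpoly_def algebra_simps flip: power_add mult_2)
  also have "\<dots> \<in> ideal_gen (polyring n) (Dq_gens n)"
    using polyring.ideal_gen_diff[OF det_Bmat_mult_Var_mem_Dq_ideal[OF n k]
        polyring.ideal_gen_mult_right[OF Dpoly_mem_Dq_ideal vk]]
    by (rule polyring.ideal_gen_mult) simp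
  finally have "Var 2 ^ (n - 3) * Var k * Var k ^ (n - 4) \<in> (ideal_gen (polyring n) (Dq_gens n) :: 'a mpoly set)"
    using vk by simp
  moreover have "Var 2 ^ (n - 3) * Var k * Var k ^ (n - 4) = (Var 2 * Var k :: 'a mpoly) ^ (n - 3)"
  proof -
    have "n - 3 = Suc (n - 4)" using n by simp
    then show ?thesis by (simp add: power_mult_distrib mult_ac)
  qed
  ultimately show ?thesis
    using n k unfolding radical_in_def by (auto intro!: exI[of _ "n - 3"])
qed

lemma Var1_Var3_power_mem:
  assumes n: "6 \<le> n" and Z: "2 \<in> Z \<or> {4..n} \<subseteq> Z" and "1 \<notin> Z" "3 \<notin> Z"
  shows "(Var 1 * Var 3) ^ (n - 4) \<in> ideal_gen (polyring n) (Dq_gens n \<union> Var ` (Z \<inter> {1..n}))"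
proof -
  let ?I = "ideal_gen (polyring n) (Dq_gens n \<union> Var ` (Z \<inter> {1..n})) :: 'a mpoly set"
  have kD: "kill_vars Z (Dpoly n) = (Var 1 ^ (n - 4) * Var 3 :: 'a mpoly)"
    using kill_vars_Dpoly[OF n Z] assms(3,4) by (simp add: kill_vars.hom_mult kill_vars.hom_power kill_vars_Var)
  have "Dpoly n - kill_vars Z (Dpoly n) \<in> ideal_gen (polyring n) (Var ` (Z \<inter> {1..n}) :: 'a mpoly set)"
    using n by (intro diff_kill_vars_mem_ideal_gen Dpoly_in_polyring) simp
  moreover have "ideal_gen (polyring n) (Var ` (Z \<inter> {1..n})) \<subseteq> ?I"
    by (rule ideal_gen_mono) blast
  ultimately have "Dpoly n - kill_vars Z (Dpoly n) \<in> ?I" by blast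
  moreover have "Dpoly n \<in> ?I"
    by (rule polyring.ideal_gen_base) (simp add: Dq_gens_def)
  ultimately have "Var 1 ^ (n - 4) * Var 3 \<in> ?I"
    using polyring.ideal_gen_diff kD by fastforce
  then have "Var 1 ^ (n - 4) * Var 3 * Var 3 ^ (n - 5) \<in> ?I"
    using n by simp
  moreover have "Var 1 ^ (n - 4) * Var 3 * Var 3 ^ (n - 5) = (Var 1 * Var 3 :: 'a mpoly) ^ (n - 4)"
  proof -
    have "n - 4 = Suc (n - 5)" using n by simp
    then show ?thesis by (simp add: power_mult_distrib mult_ac)
  qed
  ultimately show ?thesis by simp
qed

section \<open>Generators of I_n modulo x_2\<close>

context
  fixes n :: nat
  assumes n: "6 \<le> n"
begin

abbreviation rad_x2 :: "'a::comm_ring_1 mpoly set" where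
  "rad_x2 \<equiv> radical_in (polyring n) (ideal_gen (polyring n) (Dq_gens n \<union> {Var 2}))"

lemma ideal_gen_subset_rad_x2: "ideal_gen (polyring n) (Dq_gens n \<union> {Var 2}) \<subseteq> rad_x2"
  using n Dq_gens_in_polyring[of n] by (intro polyring.ideal_gen_subset_radical_in) auto

lemma Var2_mult_mem_rad_x2: "r \<in> polyring n \<Longrightarrow> Var 2 * r \<in> rad_x2"
proof -
  assume r: "r \<in> polyring n"
  have "Var 2 * r \<in> ideal_gen (polyring n) (Dq_gens n \<union> {Var 2})"
    using r by (intro polyring.ideal_gen_mult_right polyring.ideal_gen_base) auto
  then show ?thesis using ideal_gen_subset_rad_x2 by blast
qed

lemma qpoly_mem_rad_x2: "1 \<le> i \<Longrightarrow> i \<le> n - 3 \<Longrightarrow> qpoly n i \<in> rad_x2"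
  using qpoly_mem_Dq_ideal ideal_gen_mono[of "Dq_gens n" "Dq_gens n \<union> {Var 2}"] ideal_gen_subset_rad_x2
  by blast

lemma Var1_Var3_mem_rad_x2: "Var 1 * Var 3 \<in> rad_x2"
proof -
  have Z: "Var ` ({2} \<inter> {1..n}) = {Var 2 :: 'a mpoly}"
    using n by auto
  have "(Var 1 * Var 3 :: 'a mpoly) ^ (n - 4) \<in> ideal_gen (polyring n) (Dq_gens n \<union> Var ` ({2} \<inter> {1..n}))"
    using n by (intro Var1_Var3_power_mem) auto
  then have "(Var 1 * Var 3 :: 'a mpoly) ^ (n - 4) \<in> ideal_gen (polyring n) (Dq_gens n \<union> {Var 2})"
    unfolding Z .
  then have "(Var 1 * Var 3 :: 'a mpoly) ^ (n - 4) \<in> rad_x2"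
    using ideal_gen_subset_rad_x2 by blast
  moreover have "Var 1 * Var 3 \<in> (polyring n :: 'a mpoly set)"
    using n by simp
  ultimately show ?thesis
    by (rule polyring.radical_in_root[rotated])
qed

lemma Var3_Varn_mem_rad_x2: "Var 3 * Var n \<in> rad_x2"
proof -
  have "qpoly n (n - 3) \<in> (rad_x2 :: 'a mpoly set)"
    using n by (intro qpoly_mem_rad_x2) auto
  then have "Var 2 * Var (n - 1) + Var 3 * Var n \<in> (rad_x2 :: 'a mpoly set)"
    by (simp only: qpoly_last[OF n])
  moreover have "Var 2 * Var (n - 1) \<in> (rad_x2 :: 'a mpoly set)"
    using n by (intro Var2_mult_mem_rad_x2) simp
  ultimately have "(Var 2 * Var (n - 1) + Var 3 * Var n) - Var 2 * Var (n - 1) \<in> (rad_x2 :: 'a mpoly set)"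
    by (rule polyring.radical_in_diff)
  then show ?thesis by simp
qed

lemma first_row_mem_rad_x2: "(Var 1 * Var 4 :: 'a::comm_ring_1 mpoly) \<in> rad_x2 \<and> (Var 3 * Var 5 :: 'a mpoly) \<in> rad_x2"
proof -
  have q: "qpoly n 1 \<in> (rad_x2 :: 'a mpoly set)" and x2: "Var 2 * Var n \<in> (rad_x2 :: 'a mpoly set)"
    using n by (intro qpoly_mem_rad_x2 Var2_mult_mem_rad_x2; simp)+
  have W: "Var 1 * Var 4 + Var 3 * Var 5 ^ 2 \<in> (rad_x2 :: 'a mpoly set)"
    using polyring.radical_in_diff[OF q x2] unfolding qpoly_first[OF n] by (simp add: algebra_simps)
  have "(Var 1 * Var 3) * Var 5 ^ 2 \<in> (rad_x2 :: 'a mpoly set)"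
    by (rule polyring.radical_in_mult_right[OF Var1_Var3_mem_rad_x2]) (use n in simp)
  then have "Var 1 * (Var 3 * Var 5 ^ 2) \<in> (rad_x2 :: 'a mpoly set)"
    by (simp add: mult.assoc)
  note split = polyring.radical_in_split_sum[OF W this]
  have "Var 3 * Var 5 ^ 2 \<in> (rad_x2 :: 'a mpoly set)" and "Var 1 * Var 4 \<in> (rad_x2 :: 'a mpoly set)"
    using split n by simp_all
  moreover from this(1) have "Var 3 * Var 5 \<in> (rad_x2 :: 'a mpoly set)"
    by (rule polyring.radical_in_drop_square) (use n in simp_all)
  ultimately show ?thesis by simp
qed

lemma mid_row_mem_rad_x2:
  assumes i: "2 \<le> i" "i \<le> n - 5" and prev: "(Var 1 * Var (2 + i) :: 'a::comm_ring_1 mpoly) \<in> rad_x2"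
  shows "(Var 1 * Var (3 + i) :: 'a mpoly) \<in> rad_x2 \<and> (Var 3 * Var (4 + i) :: 'a mpoly) \<in> rad_x2
    \<and> (Var (2 + i) * Var n :: 'a mpoly) \<in> rad_x2"
proof -
  have q: "qpoly n i \<in> (rad_x2 :: 'a mpoly set)" and x2: "Var 2 * Var (2 + i) \<in> (rad_x2 :: 'a mpoly set)"
    using n i by (intro qpoly_mem_rad_x2 Var2_mult_mem_rad_x2; simp)+
  have W: "Var 1 * Var (3 + i) + (Var 3 * Var (4 + i) ^ 2 + Var (2 + i) * Var n) \<in> (rad_x2 :: 'a mpoly set)"
    using polyring.radical_in_diff[OF q x2] unfolding qpoly_mid[OF n i] by (simp add: algebra_simps)
  have "(Var 1 * Var 3) * Var (4 + i) ^ 2 \<in> (rad_x2 :: 'a mpoly set)"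
    by (rule polyring.radical_in_mult_right[OF Var1_Var3_mem_rad_x2]) (use n i in simp)
  moreover have "(Var 1 * Var (2 + i)) * Var n \<in> (rad_x2 :: 'a mpoly set)"
    by (rule polyring.radical_in_mult_right[OF prev]) (use n in simp)
  ultimately have "(Var 1 * Var 3) * Var (4 + i) ^ 2 + (Var 1 * Var (2 + i)) * Var n \<in> (rad_x2 :: 'a mpoly set)"
    by (rule polyring.radical_in_add)
  then have "Var 1 * (Var 3 * Var (4 + i) ^ 2 + Var (2 + i) * Var n) \<in> (rad_x2 :: 'a mpoly set)"
    by (simp add: algebra_simps)
  note split1 = polyring.radical_in_split_sum[OF W this]
  have "Var (2 + i) * (Var 3 * Var n) \<in> (rad_x2 :: 'a mpoly set)"
    by (rule polyring.radical_in_mult[OF Var3_Varn_mem_rad_x2]) (use n i in simp)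
  then have "Var 3 * (Var (2 + i) * Var n) \<in> (rad_x2 :: 'a mpoly set)"
    by (simp add: mult.left_commute)
  note split2 = polyring.radical_in_split_sum[OF split1(2) this]
  have "Var 1 * Var (3 + i) \<in> (rad_x2 :: 'a mpoly set)" and "Var 3 * Var (4 + i) ^ 2 \<in> (rad_x2 :: 'a mpoly set)"
    and "Var (2 + i) * Var n \<in> (rad_x2 :: 'a mpoly set)"
    using split1 split2 n i by simp_all
  moreover from this(2) have "Var 3 * Var (4 + i) \<in> (rad_x2 :: 'a mpoly set)"
    by (rule polyring.radical_in_drop_square) (use n i in simp_all)
  ultimately show ?thesis by simp
qed

lemma penultimate_row_mem_rad_x2:
  assumes prev: "(Var 1 * Var (n - 2) :: 'a::comm_ring_1 mpoly) \<in> rad_x2"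
  shows "(Var 1 * Var (n - 1) :: 'a mpoly) \<in> rad_x2 \<and> (Var (n - 2) * Var n :: 'a mpoly) \<in> rad_x2"
proof -
  have q: "qpoly n (n - 4) \<in> (rad_x2 :: 'a mpoly set)" and x2: "Var 2 * Var (n - 2) \<in> (rad_x2 :: 'a mpoly set)"
    using n by (intro qpoly_mem_rad_x2 Var2_mult_mem_rad_x2; simp)+
  have W: "Var 1 * Var (n - 1) + Var (n - 2) * Var n \<in> (rad_x2 :: 'a mpoly set)"
    using polyring.radical_in_diff[OF q x2] unfolding qpoly_penultimate[OF n] by (simp add: algebra_simps)
  have "(Var 1 * Var (n - 2)) * Var n \<in> (rad_x2 :: 'a mpoly set)"
    by (rule polyring.radical_in_mult_right[OF prev]) (use n in simp)
  then have "Var 1 * (Var (n - 2) * Var n) \<in> (rad_x2 :: 'a mpoly set)"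
    by (simp add: mult.assoc)
  note split = polyring.radical_in_split_sum[OF W this]
  show ?thesis using split n by simp
qed

lemma Var1_mult_mem_rad_x2: "4 \<le> k \<Longrightarrow> k \<le> n - 1 \<Longrightarrow> (Var 1 * Var k :: 'a::comm_ring_1 mpoly) \<in> rad_x2"
proof (induction k rule: nat_induct_at_least)
  case base
  show ?case using first_row_mem_rad_x2 by (rule conjunct1)
next
  case (Suc k)
  then have prev: "(Var 1 * Var k :: 'a mpoly) \<in> rad_x2" by simp
  show ?case
  proof (cases "Suc k \<le> n - 2")
    case True
    have k: "2 + (k - 2) = k" "3 + (k - 2) = Suc k" using Suc(1) by simp_all
    have "2 \<le> k - 2" "k - 2 \<le> n - 5" using Suc(1) True by simp_all
    from mid_row_mem_rad_x2[OF this] prev show ?thesis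
      unfolding k by blast
  next
    case False
    then have k: "k = n - 2" "Suc k = n - 1" using Suc(3) by simp_all
    from penultimate_row_mem_rad_x2[OF prev[unfolded k(1)]] show ?thesis
      unfolding k(2) by (rule conjunct1)
  qed
qed

lemma Var3_mult_mem_rad_x2:
  assumes b: "5 \<le> b" "b \<le> n"
  shows "(Var 3 * Var b :: 'a::comm_ring_1 mpoly) \<in> rad_x2"
proof (cases "b = 5")
  case True
  show ?thesis unfolding True by (rule conjunct2[OF first_row_mem_rad_x2])
next
  case not5: False
  show ?thesis
  proof (cases "b = n")
    case True
    show ?thesis unfolding True by (rule Var3_Varn_mem_rad_x2)
  next
    case False
    have i: "2 \<le> b - 4" "b - 4 \<le> n - 5" and b': "2 + (b - 4) = b - 2" "4 + (b - 4) = b"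
      using b not5 False by simp_all
    have "(Var 1 * Var (b - 2) :: 'a mpoly) \<in> rad_x2"
      using i by (intro Var1_mult_mem_rad_x2) simp_all
    from mid_row_mem_rad_x2[OF i this[folded b'(1)]] show ?thesis
      unfolding b'(2) by (elim conjE)
  qed
qed

lemma mult_Varn_mem_rad_x2:
  assumes k: "4 \<le> k" "k \<le> n - 2"
  shows "(Var k * Var n :: 'a::comm_ring_1 mpoly) \<in> rad_x2"
proof -
  have prev: "(Var 1 * Var k :: 'a mpoly) \<in> rad_x2"
    using k n by (intro Var1_mult_mem_rad_x2) simp_all
  show ?thesis
  proof (cases "k = n - 2")
    case True
    from penultimate_row_mem_rad_x2[OF prev[unfolded True]] show ?thesis
      unfolding True by (rule conjunct2)
  next
    case False
    have i: "2 \<le> k - 2" "k - 2 \<le> n - 5" and k2: "2 + (k - 2) = k" using k False by simp_all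
    have "(Var 1 * Var (2 + (k - 2)) :: 'a mpoly) \<in> rad_x2"
      unfolding k2 by (rule prev)
    from mid_row_mem_rad_x2[OF i this] show ?thesis
      unfolding k2 by (elim conjE)
  qed
qed

lemma In_edge_mem_rad_x2:
  assumes ab: "In_edge n a b" and a: "a \<noteq> 2"
  shows "(Var a * Var b :: 'a::comm_ring_1 mpoly) \<in> rad_x2"
proof -
  from ab a consider (one) "a = 1" "3 \<le> b" "b \<le> n - 1" | (three) "a = 3" "5 \<le> b" "b \<le> n"
    | (to_n) "4 \<le> a" "a \<le> n - 2" "b = n"
    unfolding In_edge_def by blast
  then show ?thesis
  proof cases
    case one
    show ?thesis
    proof (cases "b = 3")
      case True
      show ?thesis unfolding one(1) True by (rule Var1_Var3_mem_rad_x2)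
    next
      case False
      show ?thesis unfolding one(1) by (rule Var1_mult_mem_rad_x2) (use one False in simp_all)
    qed
  next
    case three
    show ?thesis unfolding three(1) by (rule Var3_mult_mem_rad_x2) (use three in simp_all)
  next
    case to_n
    show ?thesis unfolding to_n(3) by (rule mult_Varn_mem_rad_x2) (use to_n in simp_all)
  qed
qed

end

lemma In_edge_ge4_mem_Dq_radical:
  assumes n: "6 \<le> n" and ab: "In_edge n a b" and b: "4 \<le> b"
  shows "(Var a * Var b :: 'a::comm_ring_1 mpoly) \<in> radical_in (polyring n) (ideal_gen (polyring n) (Dq_gens n))"
proof (cases "a = 2")
  case True
  show ?thesis
    unfolding True by (rule Var2_mult_Var_mem_Dq_radical[OF n b]) (use In_edge_range[OF ab] in simp)
next
  case False
  show ?thesis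
  proof (rule polyring.radical_in_union_cancel[OF Dq_gens_in_polyring])
    show "Var a * Var b \<in> radical_in (polyring n) (ideal_gen (polyring n) (Dq_gens n \<union> {Var 2}))"
      by (rule In_edge_mem_rad_x2[OF n ab False])
  next
    fix h :: "'a mpoly" assume "h \<in> {Var 2}"
    have "Var a * (Var 2 * Var b) \<in> radical_in (polyring n) (ideal_gen (polyring n) (Dq_gens n))"
      using In_edge_range[OF ab]
      by (intro polyring.radical_in_mult Var2_mult_Var_mem_Dq_radical[OF n b]) simp_all
    then show "Var a * Var b * h \<in> radical_in (polyring n) (ideal_gen (polyring n) (Dq_gens n))"
      using \<open>h \<in> {Var 2}\<close> by (simp add: mult_ac)
  qed (use n in simp)
qed

lemma Var1_Var3_mem_Dq_radical:
  assumes n: "6 \<le> n"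
  shows "(Var 1 * Var 3 :: 'a::comm_ring_1 mpoly) \<in> radical_in (polyring n) (ideal_gen (polyring n) (Dq_gens n))"
proof (rule polyring.radical_in_union_cancel[OF Dq_gens_in_polyring])
  have "(Var 1 * Var 3 :: 'a mpoly) ^ (n - 4) \<in> ideal_gen (polyring n) (Dq_gens n \<union> Var ` ({4..n} \<inter> {1..n}))"
    using n by (intro Var1_Var3_power_mem) auto
  then show "(Var 1 * Var 3 :: 'a mpoly)
      \<in> radical_in (polyring n) (ideal_gen (polyring n) (Dq_gens n \<union> Var ` ({4..n} \<inter> {1..n})))"
    using n by (auto simp: radical_in_def intro!: exI[of _ "n - 4"])
next
  fix h :: "'a mpoly" assume "h \<in> Var ` ({4..n} \<inter> {1..n})"
  then obtain k where k: "4 \<le> k" "k \<le> n" and h: "h = Var k" by auto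
  show "Var 1 * Var 3 * h \<in> radical_in (polyring n) (ideal_gen (polyring n) (Dq_gens n))"
  proof (cases "k = n")
    case True
    have "Var 1 * (Var 3 * Var n) \<in> radical_in (polyring n) (ideal_gen (polyring n) (Dq_gens n :: 'a mpoly set))"
      using n by (intro polyring.radical_in_mult In_edge_ge4_mem_Dq_radical) (simp_all add: In_edge_def)
    then show ?thesis unfolding h True by (simp add: mult_ac)
  next
    case False
    have "Var 3 * (Var 1 * Var k) \<in> radical_in (polyring n) (ideal_gen (polyring n) (Dq_gens n :: 'a mpoly set))"
      using n k False by (intro polyring.radical_in_mult In_edge_ge4_mem_Dq_radical) (simp_all add: In_edge_def)
    then show ?thesis unfolding h by (simp add: mult_ac)
  qed
qed (use n in simp)

lemma In_ideal_subset_Dq_radical: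
  assumes n: "6 \<le> n"
  shows "ideal_gen (polyring n) (In_gens n :: 'a::comm_ring_1 mpoly set)
    \<subseteq> radical_in (polyring n) (ideal_gen (polyring n) (Dq_gens n))"
proof (rule polyring.ideal_gen_subset_radical_in_ideal_gen)
  show "(In_gens n :: 'a mpoly set) \<subseteq> radical_in (polyring n) (ideal_gen (polyring n) (Dq_gens n))"
  proof
    fix g :: "'a mpoly" assume "g \<in> In_gens n"
    then obtain a b where g: "g = Var a * Var b" and ab: "In_edge n a b"
      unfolding In_gens_eq by blast
    show "g \<in> radical_in (polyring n) (ideal_gen (polyring n) (Dq_gens n))"
    proof (cases "4 \<le> b")
      case True
      show ?thesis unfolding g by (rule In_edge_ge4_mem_Dq_radical[OF n ab True])
    next
      case False
      then have "a = 1" "b = 3" using ab by (auto simp: In_edge_def)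
      show ?thesis unfolding g \<open>a = 1\<close> \<open>b = 3\<close> by (rule Var1_Var3_mem_Dq_radical[OF n])
    qed
  qed
qed

lemma Dq_radical_subset_In_ideal:
  assumes n: "6 \<le> n"
  shows "radical_in (polyring n) (ideal_gen (polyring n) (Dq_gens n))
    \<subseteq> ideal_gen (polyring n) (In_gens n :: 'a::idom mpoly set)"
proof
  fix f :: "'a mpoly" assume "f \<in> radical_in (polyring n) (ideal_gen (polyring n) (Dq_gens n))"
  then obtain k where f: "f \<in> polyring n" and "f ^ k \<in> ideal_gen (polyring n) (Dq_gens n)"
    unfolding radical_in_def by blast
  then have "f ^ k \<in> ideal_gen (polyring n) (In_gens n)"
    using Dq_ideal_subset_In_ideal[OF n] by blast
  then show "f \<in> ideal_gen (polyring n) (In_gens n)"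
    by (rule In_ideal_radical[OF n f])
qed

theorem proposition2p2:
  fixes n :: nat
  assumes "n \<ge> 6"
  shows "ideal_gen (polyring n :: 'a::field mpoly set) (In_gens n) =
         radical_in (polyring n)
           (ideal_gen (polyring n) ({Dpoly n} \<union> {qpoly n i | i. 1 \<le> i \<and> i \<le> n - 3}))"
  unfolding Dq_gens_def[symmetric]
  by (rule subset_antisym[OF In_ideal_subset_Dq_radical[OF assms] Dq_radical_subset_In_ideal[OF assms]])

end
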